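(* For any $(m,n)$-Dyck path $\Pi$, $\operatorname{maxtdinv}(\Pi) = \operatorname{tdinv}(PF)$ where $PF$ is the parking function supported by $\Pi$ with $\sigma(PF) = n \, \dots \, 2 \, \, 1$. In particular, \[ \operatorname{maxtdinv}(\Pi) = \sum_{c,c'} \chi(\rank(c) < \rank(c') < \rank(c)+m) \] where the sum is over parking spaces $c,c'$ in $\Pi$.
   Context: Let $m,n$ be positive integers. An $(m,n)$-Dyck path $\Pi$ is a lattice path of north and east steps from $(0,0)$ to $(m,n)$ staying weakly above the line $y=\frac{n}{m}x$. The cells directly east of (and adjacent to) north steps of $\Pi$ are called parking spaces. An $(m,n)$-parking function $PF$ supported by $\Pi$ (written $\Pi(PF)=\Pi$) is obtained by filling the parking spaces with the labels ("cars") $1,\dots,n$, each used once, so that labels increase up each column. For a lattice point, $\rank(x,y)=my-nx+\lfloor \frac{x\gcd(m,n)}{m}\rfloor$; the rank of a cell (or of the car in it) is the rank of its southwest corner. The word $\sigma(PF)$ lists the cars in order from highest to lowest rank. Define $\operatorname{tdinv}(PF)=\sum_{\text{cars } i<j}\chi(\rank(i)<\rank(j)<\rank(i)+m)$ and $\operatorname{maxtdinv}(\Pi)=\max\{\operatorname{tdinv}(PF):\Pi(PF)=\Pi\}$. Here $\chi$ is the indicator function. *)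

theory Defs
  imports Complex_Main
begin

text \<open>An (m,n)-Dyck path is encoded by the function a, where a y is the x-coordinate
of the north step of the path in row y (from (a y, y) to (a y, y+1)), for y < n.
The path is then the unique N/E lattice path from (0,0) to (m,n) with these north
steps; it stays weakly above y = (n/m) x iff n * a y \<le> m * y for all rows y
(the lowest points of the path relative to the line are the points (a y, y)).
Values of a at y \<ge> n are irrelevant.\<close>

definition dyck_path :: "nat \<Rightarrow> nat \<Rightarrow> (nat \<Rightarrow> nat) \<Rightarrow> bool" where
  "dyck_path m n a \<longleftrightarrow>
     (\<forall>y z. y \<le> z \<and> z < n \<longrightarrow> a y \<le> a z) \<and>
     (\<forall>y<n. a y \<le> m \<and> n * a y \<le> m * y)"

definition rank :: "nat \<Rightarrow> nat \<Rightarrow> nat \<Rightarrow> nat \<Rightarrow> int" where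
  "rank m n x y = int m * int y - int n * int x + \<lfloor>real (x * gcd m n) / real m\<rfloor>"

text \<open>The parking space in row y is the cell with south-west corner (a y, y).\<close>
definition space_rank :: "nat \<Rightarrow> nat \<Rightarrow> (nat \<Rightarrow> nat) \<Rightarrow> nat \<Rightarrow> int" where
  "space_rank m n a y = rank m n (a y) y"

text \<open>A parking function supported by the path a: f y is the car placed in the
parking space of row y; cars 1..n each used once; increasing up each column.\<close>
definition parking_function :: "nat \<Rightarrow> nat \<Rightarrow> (nat \<Rightarrow> nat) \<Rightarrow> (nat \<Rightarrow> nat) \<Rightarrow> bool" where
  "parking_function m n a f \<longleftrightarrow>
     bij_betw f {0..<n} {1..n} \<and>
     (\<forall>y z. y < z \<and> z < n \<and> a y = a z \<longrightarrow> f y < f z)"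

definition car_row :: "nat \<Rightarrow> (nat \<Rightarrow> nat) \<Rightarrow> nat \<Rightarrow> nat" where
  "car_row n f i = (THE y. y < n \<and> f y = i)"

definition car_rank :: "nat \<Rightarrow> nat \<Rightarrow> (nat \<Rightarrow> nat) \<Rightarrow> (nat \<Rightarrow> nat) \<Rightarrow> nat \<Rightarrow> int" where
  "car_rank m n a f i = space_rank m n a (car_row n f i)"

definition tdinv :: "nat \<Rightarrow> nat \<Rightarrow> (nat \<Rightarrow> nat) \<Rightarrow> (nat \<Rightarrow> nat) \<Rightarrow> nat" where
  "tdinv m n a f = card {(i, j). i \<in> {1..n} \<and> j \<in> {1..n} \<and> i < j \<and>
      car_rank m n a f i < car_rank m n a f j \<and>
      car_rank m n a f j < car_rank m n a f i + int m}"

definition maxtdinv :: "nat \<Rightarrow> nat \<Rightarrow> (nat \<Rightarrow> nat) \<Rightarrow> nat" where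
  "maxtdinv m n a = Max {tdinv m n a f | f. parking_function m n a f}"

text \<open>sigma(PF) = n ... 2 1 : listing cars from highest to lowest rank gives n,...,1,
i.e. car i has strictly smaller rank than car j whenever i < j.\<close>
definition sigma_is_reverse :: "nat \<Rightarrow> nat \<Rightarrow> (nat \<Rightarrow> nat) \<Rightarrow> (nat \<Rightarrow> nat) \<Rightarrow> bool" where
  "sigma_is_reverse m n a f \<longleftrightarrow>
     (\<forall>i\<in>{1..n}. \<forall>j\<in>{1..n}. i < j \<longrightarrow> car_rank m n a f i < car_rank m n a f j)"

end

theory Submission
  imports Defs
begin

text \<open>
  Parking spaces of a Dyck path lie in columns x < m, and on such cells the rank is
  injective; so the rank orders the parking spaces strictly. For any filling f, tdinv f
  counts the pairs of spaces (c, c') with rank c < rank c' < rank c + m whose cars are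
  in increasing order, hence tdinv f is at most the number of all such pairs, with
  equality exactly when cars increase with rank, i.e. when \<sigma>(f) = n \<dots> 2 1. Numbering
  the spaces by increasing rank gives such a filling, and it respects columns because
  rank increases up each column.
\<close>

lemma rank_eq_div:
  assumes "0 < m"
  shows "rank m n x y = int m * int y - int n * int x + int (x div (m div gcd m n))"
proof -
  define g where "g = gcd m n"
  obtain q where q: "m = g * q" unfolding g_def by (metis dvd_def gcd_dvd1)
  have g0: "g > 0" using assms by (simp add: g_def)
  have "\<lfloor>real (x * g) / real m\<rfloor> = int ((x * g) div m)"
    by (metis floor_divide_of_nat_eq of_nat_id)
  also have "(x * g) div m = x div (m div g)"
    using g0 by (subst (1 2) q) (simp add: mult.commute[of x])
  finally show ?thesis unfolding rank_def g_def by simp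
qed

text \<open>
  With g = gcd m n, m = g q, n = g p, the rank is g (q y - p x) + x div q with
  x div q < g: it determines x div q and q y - p x, and coprimality of p and q then
  fixes x mod q.
\<close>
lemma rank_inj:
  assumes "0 < m" "x < m" "x' < m" "rank m n x y = rank m n x' y'"
  shows "x = x' \<and> y = y'"
proof -
  define g q p where "g = gcd m n" and "q = m div g" and "p = n div g"
  have g: "g > 0" and m: "m = g * q" and n: "n = g * p"
    using assms(1) by (simp_all add: g_def q_def p_def)
  have q0: "q > 0" using m assms(1) by (cases "q = 0") auto
  have coprime: "coprime (int q) (int p)"
    using assms(1) unfolding p_def q_def g_def coprime_int_iff
    by (metis coprime_commute div_gcd_coprime gcd_eq_0_iff not_gr0)
  have rank_split: "rank m n x y = int g * (int q * int y - int p * int x) + int (x div q)"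
    for x y
  proof -
    have "rank m n x y = int m * int y - int n * int x + int (x div q)"
      using rank_eq_div[OF assms(1)] by (simp add: q_def g_def)
    also have "\<dots> = int g * (int q * int y - int p * int x) + int (x div q)"
      by (subst m, subst n) (simp add: algebra_simps)
    finally show ?thesis .
  qed
  have k_bound: "x div q < g" if "x < m" for x
    using that m q0 by (simp add: div_less_iff_less_mult mult.commute)
  have mod_g: "rank m n x y mod int g = int (x div q)"
    and div_g: "rank m n x y div int g = int q * int y - int p * int x" if "x < m" for x y
    using k_bound[OF that] g unfolding rank_split by simp_all
  have same_div: "x div q = x' div q"
    using mod_g[OF assms(2), of y] mod_g[OF assms(3), of y'] assms(4) by simp
  have lin: "int q * (int y - int y') = int p * (int x - int x')"
    using div_g[OF assms(2), of y] div_g[OF assms(3), of y'] assms(4) by (simp add: algebra_simps)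
  then have "int q dvd int p * (int x - int x')" by (metis dvd_triv_left)
  with coprime have "int q dvd int x - int x'" by (simp add: coprime_dvd_mult_right_iff)
  then have "x mod q = x' mod q"
    by (metis mod_eq_dvd_iff of_nat_eq_iff zmod_int)
  with same_div have "x = x'" by (metis div_mult_mod_eq)
  with lin q0 show ?thesis by simp
qed

lemma rank_strict_mono_row:
  assumes "0 < m" "y < z"
  shows "rank m n x y < rank m n x z"
  using assms unfolding rank_def by (simp add: mult_strict_left_mono)

lemma dyck_path_column_less:
  assumes "0 < m" "dyck_path m n a" "y < n"
  shows "a y < m"
proof -
  have "n * a y \<le> m * y" using assms(2,3) unfolding dyck_path_def by blast
  also have "\<dots> < n * m" using assms(1,3) by (simp add: mult.commute)
  finally show ?thesis by simp
qed

lemma space_rank_inj_on: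
  assumes "0 < m" "dyck_path m n a"
  shows "inj_on (space_rank m n a) {0..<n}"
proof (rule inj_onI)
  fix y z assume "y \<in> {0..<n}" "z \<in> {0..<n}" "space_rank m n a y = space_rank m n a z"
  then show "y = z"
    using rank_inj[OF assms(1) dyck_path_column_less[OF assms] dyck_path_column_less[OF assms]]
    by (simp add: space_rank_def)
qed

lemma car_row_eq_the_inv_into: "car_row n f i = the_inv_into {0..<n} f i"
  unfolding car_row_def the_inv_into_def by simp

lemma car_row_f_eq:
  assumes "bij_betw f {0..<n} {1..n}" "c < n"
  shows "car_row n f (f c) = c"
  using assms by (simp add: car_row_eq_the_inv_into bij_betw_def the_inv_into_f_f)

lemma car_row_less_and_f_car_row:
  assumes "bij_betw f {0..<n} {1..n}" "i \<in> {1..n}"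
  shows "car_row n f i < n" "f (car_row n f i) = i"
  using bij_betw_apply[OF bij_betw_the_inv_into[OF assms(1)] assms(2)]
    f_the_inv_into_f_bij_betw[OF assms(1)] assms(2)
  by (simp_all add: car_row_eq_the_inv_into)

definition tdinv_pairs :: "nat \<Rightarrow> nat \<Rightarrow> (nat \<Rightarrow> nat) \<Rightarrow> (nat \<times> nat) set" where
  "tdinv_pairs m n a = {(c, c'). c < n \<and> c' < n \<and> space_rank m n a c < space_rank m n a c' \<and>
      space_rank m n a c' < space_rank m n a c + int m}"

lemma finite_tdinv_pairs: "finite (tdinv_pairs m n a)"
  by (rule finite_subset[of _ "{0..<n} \<times> {0..<n}"]) (auto simp: tdinv_pairs_def)

lemma tdinv_eq_card_ordered_pairs:
  assumes f: "bij_betw f {0..<n} {1..n}"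
  shows "tdinv m n a f = card {(c, c') \<in> tdinv_pairs m n a. f c < f c'}"
proof -
  let ?P = "{(c, c') \<in> tdinv_pairs m n a. f c < f c'}"
  let ?T = "{(i, j). i \<in> {1..n} \<and> j \<in> {1..n} \<and> i < j \<and>
      car_rank m n a f i < car_rank m n a f j \<and>
      car_rank m n a f j < car_rank m n a f i + int m}"
  have f_into: "f c \<in> {1..n}" if "c < n" for c
    using bij_betw_apply[OF f] that by simp
  have "?T = (\<lambda>(c, c'). (f c, f c')) ` ?P"
  proof (intro equalityI subsetI)
    fix p assume "p \<in> ?T"
    then obtain i j where p: "p = (i, j)" and ij: "(i, j) \<in> ?T" by blast
    let ?c = "car_row n f i" and ?c' = "car_row n f j"
    have "(?c, ?c') \<in> ?P"
      using ij car_row_less_and_f_car_row[OF f, of i] car_row_less_and_f_car_row[OF f, of j]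
      by (simp add: car_rank_def tdinv_pairs_def)
    moreover have "p = (f ?c, f ?c')"
      using p ij car_row_less_and_f_car_row[OF f, of i] car_row_less_and_f_car_row[OF f, of j] by simp
    ultimately show "p \<in> (\<lambda>(c, c'). (f c, f c')) ` ?P" by force
  qed (use f_into in \<open>auto simp: tdinv_pairs_def car_rank_def car_row_f_eq[OF f]\<close>)
  moreover have "inj_on (\<lambda>(c, c'). (f c, f c')) ?P"
    using f by (auto simp: bij_betw_def inj_on_def tdinv_pairs_def)
  ultimately show ?thesis unfolding tdinv_def by (simp add: card_image)
qed

lemma tdinv_le_card_tdinv_pairs:
  assumes "bij_betw f {0..<n} {1..n}"
  shows "tdinv m n a f \<le> card (tdinv_pairs m n a)"
  unfolding tdinv_eq_card_ordered_pairs[OF assms]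
  by (rule card_mono[OF finite_tdinv_pairs]) blast

lemma order_preserving_converse:
  fixes f :: "'a \<Rightarrow> 'b::linorder" and g :: "'a \<Rightarrow> 'c::linorder"
  assumes "inj_on f A" "inj_on g A" "\<forall>x\<in>A. \<forall>y\<in>A. f x < f y \<longrightarrow> g x < g y"
  shows "\<forall>x\<in>A. \<forall>y\<in>A. g x < g y \<longrightarrow> f x < f y"
proof (intro ballI impI)
  fix x y assume xy: "x \<in> A" "y \<in> A" "g x < g y"
  then have "f x \<noteq> f y" using assms(1) by (auto dest: inj_onD)
  moreover have "\<not> f y < f x" using assms(3) xy by force
  ultimately show "f x < f y" by simp
qed

lemma sigma_is_reverse_iff:
  assumes f: "bij_betw f {0..<n} {1..n}" and R: "inj_on (space_rank m n a) {0..<n}"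
  shows "sigma_is_reverse m n a f \<longleftrightarrow>
    (\<forall>c\<in>{0..<n}. \<forall>c'\<in>{0..<n}. space_rank m n a c < space_rank m n a c' \<longrightarrow> f c < f c')"
proof -
  have "sigma_is_reverse m n a f \<longleftrightarrow>
      (\<forall>c\<in>{0..<n}. \<forall>c'\<in>{0..<n}. f c < f c' \<longrightarrow> space_rank m n a c < space_rank m n a c')"
    unfolding sigma_is_reverse_def bij_betw_imp_surj_on[OF f, symmetric]
    by (simp add: car_rank_def car_row_f_eq[OF f])
  also have "\<dots> \<longleftrightarrow>
      (\<forall>c\<in>{0..<n}. \<forall>c'\<in>{0..<n}. space_rank m n a c < space_rank m n a c' \<longrightarrow> f c < f c')"
    using order_preserving_converse[OF bij_betw_imp_inj_on[OF f] R]
      order_preserving_converse[OF R bij_betw_imp_inj_on[OF f]] by blast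
  finally show ?thesis .
qed

lemma tdinv_eq_card_tdinv_pairs:
  assumes "parking_function m n a f" "sigma_is_reverse m n a f"
    and "inj_on (space_rank m n a) {0..<n}"
  shows "tdinv m n a f = card (tdinv_pairs m n a)"
proof -
  have f: "bij_betw f {0..<n} {1..n}" using assms(1) by (simp add: parking_function_def)
  then have "{(c, c') \<in> tdinv_pairs m n a. f c < f c'} = tdinv_pairs m n a"
    using assms(2) sigma_is_reverse_iff[OF f assms(3)] by (auto simp: tdinv_pairs_def)
  then show ?thesis by (simp add: tdinv_eq_card_ordered_pairs[OF f])
qed

lemma card_le_strict_mono:
  fixes g :: "'a \<Rightarrow> 'b::linorder"
  assumes "finite A" "y \<in> A" "g x < g y"
  shows "card {z \<in> A. g z \<le> g x} < card {z \<in> A. g z \<le> g y}"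
proof (rule psubset_card_mono)
  have "{z \<in> A. g z \<le> g x} \<subseteq> {z \<in> A. g z \<le> g y}"
    using assms(3) by auto
  moreover have "y \<in> {z \<in> A. g z \<le> g y} - {z \<in> A. g z \<le> g x}"
    using assms(2,3) by simp
  ultimately show "{z \<in> A. g z \<le> g x} \<subset> {z \<in> A. g z \<le> g y}" by blast
qed (simp add: assms(1))

lemma bij_betw_card_le:
  fixes g :: "'a \<Rightarrow> 'b::linorder"
  assumes "finite A" "inj_on g A"
  shows "bij_betw (\<lambda>x. card {z \<in> A. g z \<le> g x}) A {1..card A}"
proof -
  let ?F = "\<lambda>x. card {z \<in> A. g z \<le> g x}"
  have inj: "inj_on ?F A"
  proof (rule inj_onI, rule ccontr)
    fix x y assume xy: "x \<in> A" "y \<in> A" "?F x = ?F y" "x \<noteq> y"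
    then have "g x \<noteq> g y" using assms(2) by (auto dest: inj_onD)
    then consider "g x < g y" | "g y < g x" by (rule neqE)
    then show False
      using card_le_strict_mono[OF assms(1) xy(2), of g x]
        card_le_strict_mono[OF assms(1) xy(1), of g y] xy(3) by cases simp_all
  qed
  have into: "?F ` A \<subseteq> {1..card A}"
  proof (rule image_subsetI)
    fix x assume "x \<in> A"
    then have "x \<in> {z \<in> A. g z \<le> g x}" by simp
    then have "0 < ?F x" using assms(1) by (auto simp: card_gt_0_iff)
    moreover have "?F x \<le> card A" using assms(1) by (intro card_mono) auto
    ultimately show "?F x \<in> {1..card A}" by simp
  qed
  have "card (?F ` A) = card {1..card A}" using card_image[OF inj] by simp
  then have "?F ` A = {1..card A}" using card_subset_eq[OF _ into] by simp
  with inj show ?thesis by (simp add: bij_betw_def)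
qed

lemma exists_sigma_is_reverse:
  assumes "0 < m" "dyck_path m n a"
  shows "\<exists>f. parking_function m n a f \<and> sigma_is_reverse m n a f"
proof -
  let ?R = "space_rank m n a"
  define f where "f c = card {z \<in> {0..<n}. ?R z \<le> ?R c}" for c
  have R: "inj_on ?R {0..<n}" by (rule space_rank_inj_on[OF assms])
  have f: "bij_betw f {0..<n} {1..n}"
    using bij_betw_card_le[OF _ R] unfolding f_def by simp
  have mono: "f c < f c'" if "c' < n" "?R c < ?R c'" for c c'
    using card_le_strict_mono[of "{0..<n}" c' ?R c] that unfolding f_def by simp
  have "parking_function m n a f"
    unfolding parking_function_def
  proof (intro conjI f allI impI)
    fix y z assume yz: "y < z \<and> z < n \<and> a y = a z"
    then have "?R y < ?R z"
      using rank_strict_mono_row[OF assms(1), where x = "a z"] by (simp add: space_rank_def)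
    with yz mono show "f y < f z" by blast
  qed
  moreover have "sigma_is_reverse m n a f"
    using mono by (simp add: sigma_is_reverse_iff[OF f R])
  ultimately show ?thesis by blast
qed

lemma card_tdinv_pairs_eq_sum:
  "int (card (tdinv_pairs m n a)) =
    (\<Sum>c\<in>{0..<n}. \<Sum>c'\<in>{0..<n}.
       (if space_rank m n a c < space_rank m n a c' \<and>
           space_rank m n a c' < space_rank m n a c + int m then 1 else 0))"
proof -
  let ?in_window = "\<lambda>p. space_rank m n a (fst p) < space_rank m n a (snd p) \<and>
      space_rank m n a (snd p) < space_rank m n a (fst p) + int m"
  have "tdinv_pairs m n a = {0..<n} \<times> {0..<n} \<inter> {p. ?in_window p}"
    by (auto simp: tdinv_pairs_def)
  then have "int (card (tdinv_pairs m n a)) =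
      (\<Sum>p\<in>{0..<n} \<times> {0..<n}. if ?in_window p then 1 else 0)"
    by (simp add: sum.If_cases)
  then show ?thesis
    by (simp add: sum.cartesian_product case_prod_beta)
qed

lemma maxtdinv_eq_card_tdinv_pairs:
  assumes "0 < m" "dyck_path m n a"
  shows "maxtdinv m n a = card (tdinv_pairs m n a)"
proof -
  let ?V = "{tdinv m n a f |f. parking_function m n a f}"
  have bound: "v \<le> card (tdinv_pairs m n a)" if "v \<in> ?V" for v
    using that by (auto simp: parking_function_def tdinv_le_card_tdinv_pairs)
  obtain f where f: "parking_function m n a f" "sigma_is_reverse m n a f"
    using exists_sigma_is_reverse[OF assms] by blast
  then have "tdinv m n a f = card (tdinv_pairs m n a)"
    by (rule tdinv_eq_card_tdinv_pairs[OF _ _ space_rank_inj_on[OF assms]])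
  with f(1) have attained: "card (tdinv_pairs m n a) \<in> ?V" by (auto intro!: exI[of _ f])
  have "finite ?V" using bound by (meson finite_nat_set_iff_bounded_le)
  then show ?thesis unfolding maxtdinv_def using bound attained by (rule Max_eqI)
qed

theorem lemma1:
  fixes m n :: nat and a :: "nat \<Rightarrow> nat"
  assumes "0 < m" and "0 < n" and "dyck_path m n a"
  shows "(\<exists>f. parking_function m n a f \<and> sigma_is_reverse m n a f) \<and>
         (\<forall>f. parking_function m n a f \<and> sigma_is_reverse m n a f \<longrightarrow>
               maxtdinv m n a = tdinv m n a f) \<and>
         int (maxtdinv m n a) =
           (\<Sum>c\<in>{0..<n}. \<Sum>c'\<in>{0..<n}.
              (if space_rank m n a c < space_rank m n a c' \<and>
                  space_rank m n a c' < space_rank m n a c + int m then 1 else 0))"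
proof (intro conjI allI impI)
  have R: "inj_on (space_rank m n a) {0..<n}" by (rule space_rank_inj_on[OF assms(1,3)])
  show "\<exists>f. parking_function m n a f \<and> sigma_is_reverse m n a f"
    by (rule exists_sigma_is_reverse[OF assms(1,3)])
  show "maxtdinv m n a = tdinv m n a f"
    if "parking_function m n a f \<and> sigma_is_reverse m n a f" for f
    using that tdinv_eq_card_tdinv_pairs[OF _ _ R]
    by (simp add: maxtdinv_eq_card_tdinv_pairs[OF assms(1,3)])
  show "int (maxtdinv m n a) =
      (\<Sum>c\<in>{0..<n}. \<Sum>c'\<in>{0..<n}.
         (if space_rank m n a c < space_rank m n a c' \<and>
             space_rank m n a c' < space_rank m n a c + int m then 1 else 0))"
    by (simp add: maxtdinv_eq_card_tdinv_pairs[OF assms(1,3)] card_tdinv_pairs_eq_sum)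
qed

end
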